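(* Let $\alpha\ge4$ and $B>1$. Let $\mathcal{F}=A_n\circ\cdots\circ A_0$ be a deep learning model in which every block $A_i$ is a basic block, i.e. one of: a linear block $A(\mathbf{x})=\mathbf{A}\mathbf{x}+\mathbf{b}$ (approximation $A^\alpha=A$); a ReLU block (coordinatewise $\max(x,0)$, approximated by applying $\tilde r_{\alpha,B}$ coordinatewise); a max-pooling block with kernel size $k_0\le10$ (each output coordinate is the max of a window of $k_0^2$ inputs, approximated by applying $\tilde M_{\alpha,k_0^2,B}$ to each window); or a softmax block $A(\mathbf{x})=(\exp(x_i)/\sum_j\exp(x_j))_i$ (approximation $A^\alpha=A$). Let $\mathcal{F}^\alpha=A_n^\alpha\circ\cdots\circ A_0^\alpha$. Assume that for every input $\mathbf{x}$ considered, $\|\mathbf{x}\|_\infty\le B$ and $\|A_i\circ\cdots\circ A_0(\mathbf{x})\|_\infty\le B$, $\|A_i^\alpha\circ\cdots\circ A_0^\alpha(\mathbf{x})\|_\infty\le B$ for $0\le i\le n-1$. Then there exists a constant $C$, which can be determined independently of $\alpha$, such that $\|\mathcal{F}^\alpha(\mathbf{x})-\mathcal{F}(\mathbf{x})\|_\infty\le C2^{-\alpha}$ for every such input $\mathbf{x}$.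
   Context: Let $p_\alpha$ be a polynomial such that $m_\alpha(a,b)=\frac{(a+b)+(a-b)p_\alpha(a-b)}{2}$ satisfies $|m_\alpha(a,b)-\max(a,b)|\le2^{-\alpha}$ for all $a,b\in[0,1]$. Define $r_\alpha(x)=\frac{x+xp_\alpha(x)}{2}$ and $\tilde r_{\alpha,B}(x)=B\,r_\alpha(x/B)$. Define $M_{\alpha,1}(x_1)=x_1$, $M_{\alpha,2k}(x_1,\dots,x_{2k})=m_\alpha(M_{\alpha,k}(x_1,\dots,x_k),M_{\alpha,k}(x_{k+1},\dots,x_{2k}))$, $M_{\alpha,2k+1}(x_1,\dots,x_{2k+1})=m_\alpha(M_{\alpha,k}(x_1,\dots,x_k),M_{\alpha,k+1}(x_{k+1},\dots,x_{2k+1}))$, and $\tilde M_{\alpha,n,B}(x_1,\dots,x_n)=B'\big(M_{\alpha,n}(\tfrac{x_1}{B'}+0.5,\dots,\tfrac{x_n}{B'}+0.5)-0.5\big)$ with $B'=B/(0.5-(\lceil\log_2 n\rceil-1)2^{-\alpha})$. The constant $C$ may depend on the model parameters (the matrices of the linear blocks, kernel sizes) and on $B$, but not on $\alpha$. *)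

theory Defs
  imports Complex_Main "HOL-Computational_Algebra.Polynomial"
begin

definition linf :: "real list \<Rightarrow> real" where
  "linf xs = foldr (\<lambda>t m. max \<bar>t\<bar> m) xs 0"

definition m_alpha :: "(nat \<Rightarrow> real poly) \<Rightarrow> nat \<Rightarrow> real \<Rightarrow> real \<Rightarrow> real" where
  "m_alpha p \<alpha> a b = ((a + b) + (a - b) * poly (p \<alpha>) (a - b)) / 2"

definition r_alpha :: "(nat \<Rightarrow> real poly) \<Rightarrow> nat \<Rightarrow> real \<Rightarrow> real" where
  "r_alpha p \<alpha> x = (x + x * poly (p \<alpha>) x) / 2"

definition r_tilde :: "(nat \<Rightarrow> real poly) \<Rightarrow> nat \<Rightarrow> real \<Rightarrow> real \<Rightarrow> real" where
  "r_tilde p \<alpha> B x = B * r_alpha p \<alpha> (x / B)"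

function M_tree :: "(real \<Rightarrow> real \<Rightarrow> real) \<Rightarrow> real list \<Rightarrow> real" where
  "M_tree m xs = (if length xs \<le> 1 then hd xs
     else m (M_tree m (take (length xs div 2) xs)) (M_tree m (drop (length xs div 2) xs)))"
  by pat_completeness auto
termination by (relation "measure (\<lambda>(m, xs). length xs)") auto

definition M_alpha :: "(nat \<Rightarrow> real poly) \<Rightarrow> nat \<Rightarrow> real list \<Rightarrow> real" where
  "M_alpha p \<alpha> xs = M_tree (m_alpha p \<alpha>) xs"

definition B_prime :: "nat \<Rightarrow> nat \<Rightarrow> real \<Rightarrow> real" where
  "B_prime \<alpha> n B = B / (1/2 - (real_of_int \<lceil>log 2 (real n)\<rceil> - 1) * (1/2) ^ \<alpha>)"

definition M_tilde :: "(nat \<Rightarrow> real poly) \<Rightarrow> nat \<Rightarrow> nat \<Rightarrow> real \<Rightarrow> real list \<Rightarrow> real" where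
  "M_tilde p \<alpha> n B xs =
     B_prime \<alpha> n B * (M_alpha p \<alpha> (map (\<lambda>x. x / B_prime \<alpha> n B + 1/2) xs) - 1/2)"

(* Basic blocks. MaxPool k0 ws: kernel size k0, ws = list of windows, each window is the list of
   the k0^2 input indices whose maximum forms one output coordinate. *)
datatype block =
    Linear "real list list" "real list"
  | ReLU
  | MaxPool nat "nat list list"
  | Softmax

fun out_dim :: "nat \<Rightarrow> block \<Rightarrow> nat" where
  "out_dim d (Linear A b) = length A"
| "out_dim d ReLU = d"
| "out_dim d (MaxPool k0 ws) = length ws"
| "out_dim d Softmax = d"

fun wf_block :: "nat \<Rightarrow> block \<Rightarrow> bool" where
  "wf_block d (Linear A b) = (length b = length A \<and> (\<forall>row\<in>set A. length row = d))"
| "wf_block d ReLU = True"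
| "wf_block d (MaxPool k0 ws) =
     (1 \<le> k0 \<and> k0 \<le> 10 \<and> (\<forall>w\<in>set ws. length w = k0^2 \<and> (\<forall>i\<in>set w. i < d)))"
| "wf_block d Softmax = True"

fun wf_model :: "nat \<Rightarrow> block list \<Rightarrow> bool" where
  "wf_model d [] = True"
| "wf_model d (b # bs) = (wf_block d b \<and> wf_model (out_dim d b) bs)"

fun apply_block :: "block \<Rightarrow> real list \<Rightarrow> real list" where
  "apply_block (Linear A b) x = map2 (+) (map (\<lambda>row. sum_list (map2 (*) row x)) A) b"
| "apply_block ReLU x = map (\<lambda>t. max t 0) x"
| "apply_block (MaxPool k0 ws) x = map (\<lambda>w. Max (set (map (\<lambda>i. x ! i) w))) ws"
| "apply_block Softmax x = map (\<lambda>t. exp t / sum_list (map exp x)) x"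

fun apply_block_approx :: "(nat \<Rightarrow> real poly) \<Rightarrow> nat \<Rightarrow> real \<Rightarrow> block \<Rightarrow> real list \<Rightarrow> real list" where
  "apply_block_approx p \<alpha> B (Linear A b) x = apply_block (Linear A b) x"
| "apply_block_approx p \<alpha> B ReLU x = map (r_tilde p \<alpha> B) x"
| "apply_block_approx p \<alpha> B (MaxPool k0 ws) x =
     map (\<lambda>w. M_tilde p \<alpha> (k0^2) B (map (\<lambda>i. x ! i) w)) ws"
| "apply_block_approx p \<alpha> B Softmax x = apply_block Softmax x"

(* model [A_0, ..., A_n] applied as A_n \<circ> ... \<circ> A_0 *)
definition eval_model :: "block list \<Rightarrow> real list \<Rightarrow> real list" where
  "eval_model bs x = fold apply_block bs x"

definition eval_model_approx :: "(nat \<Rightarrow> real poly) \<Rightarrow> nat \<Rightarrow> real \<Rightarrow> block list \<Rightarrow> real list \<Rightarrow> real list" where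
  "eval_model_approx p \<alpha> B bs x = fold (apply_block_approx p \<alpha> B) bs x"

end

theory Submission
  imports Defs
begin

text \<open>Every block satisfies, on inputs bounded by \<open>B\<close>, an estimate
  \<open>\<parallel>A\<^sup>\<alpha>(x') - A(x)\<parallel>\<^sub>\<infinity> \<le> K \<parallel>x' - x\<parallel>\<^sub>\<infinity> + C 2\<^sup>-\<^sup>\<alpha>\<close>; such estimates compose
  along the model, and \<open>x' = x\<close> gives the theorem. Linear and softmax blocks are exact and
  Lipschitz on the ball. For ReLU, \<open>r\<^sub>\<alpha>(s) = m\<^sub>\<alpha>(s, 0)\<close>. For max-pooling, the affine map
  \<open>x \<mapsto> x / B' + 1/2\<close> places the window inside \<open>[(l - 1) 2\<^sup>-\<^sup>\<alpha>, 1 - (l - 1) 2\<^sup>-\<^sup>\<alpha>]\<close>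
  with \<open>l = \<lceil>log\<^sub>2 k\<^sub>0\<^sup>2\<rceil>\<close>, so that each of the \<open>l\<close> levels of the tree of \<open>m\<^sub>\<alpha>\<close> sees
  arguments in \<open>[0, 1]\<close> and loses at most \<open>2\<^sup>-\<^sup>\<alpha>\<close>.\<close>

abbreviation linf_dist :: "real list \<Rightarrow> real list \<Rightarrow> real" where
  "linf_dist u v \<equiv> linf (map2 (-) u v)"

lemma linf_Nil [simp]: "linf [] = 0"
  by (simp add: linf_def)

lemma linf_Cons [simp]: "linf (a # xs) = max \<bar>a\<bar> (linf xs)"
  by (simp add: linf_def)

lemma linf_le_iff: "linf xs \<le> c \<longleftrightarrow> 0 \<le> c \<and> (\<forall>t\<in>set xs. \<bar>t\<bar> \<le> c)"
  by (induction xs) auto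

lemma linf_nonneg: "0 \<le> linf xs"
  using linf_le_iff by blast

lemma nth_le_linf: "i < length xs \<Longrightarrow> \<bar>xs ! i\<bar> \<le> linf xs"
  using linf_le_iff nth_mem by blast

lemma linf_dist_le:
  assumes "length u = length v" "0 \<le> c" "\<And>i. i < length u \<Longrightarrow> \<bar>u ! i - v ! i\<bar> \<le> c"
  shows "linf_dist u v \<le> c"
  using assms by (auto simp: linf_le_iff in_set_conv_nth)

lemma nth_diff_le_linf_dist:
  assumes "length u = length v" "i < length u"
  shows "\<bar>u ! i - v ! i\<bar> \<le> linf_dist u v"
  using nth_le_linf[of i "map2 (-) u v"] assms by simp

lemma linf_dist_self [simp]: "linf_dist x x = 0"
  using linf_dist_le[of x x 0] linf_nonneg[of "map2 (-) x x"] by simp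

lemma M_tree_singleton [simp]: "M_tree m [y] = y"
  by (simp add: M_tree.simps)

lemma M_tree_split:
  "2 \<le> length xs \<Longrightarrow>
    M_tree m xs = m (M_tree m (take (length xs div 2) xs)) (M_tree m (drop (length xs div 2) xs))"
  by (subst M_tree.simps) simp

declare M_tree.simps [simp del]

text \<open>A tree of depth \<open>k\<close> loses at most \<open>e\<close> per level, provided every inner node receives
  arguments in \<open>[0, 1]\<close>; the margin \<open>(k - 1) e\<close> on the leaves guarantees this, because a subtree
  of depth \<open>k - 1\<close> is within \<open>(k - 1) e\<close> of its maximum.\<close>

lemma M_tree_approx_Max:
  fixes m :: "real \<Rightarrow> real \<Rightarrow> real"
  assumes hm: "\<And>a b. a \<in> {0..1} \<Longrightarrow> b \<in> {0..1} \<Longrightarrow> \<bar>m a b - max a b\<bar> \<le> e"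
    and "ys \<noteq> []" and "length ys \<le> 2 ^ k"
    and "\<forall>y\<in>set ys. (real k - 1) * e \<le> y \<and> y \<le> 1 - (real k - 1) * e"
  shows "\<bar>M_tree m ys - Max (set ys)\<bar> \<le> real k * e"
  using assms(2-)
proof (induction k arbitrary: ys)
  case 0
  then obtain y where "ys = [y]" by (cases ys) auto
  then show ?case by simp
next
  case (Suc k)
  have e0: "0 \<le> e" using hm[of 0 0] by simp
  show ?case
  proof (cases "length ys \<le> 1")
    case True
    then obtain y where "ys = [y]" using Suc.prems(1) by (cases ys) auto
    then show ?thesis using e0 by simp
  next
    case False
    define L where "L = take (length ys div 2) ys"
    define R where "R = drop (length ys div 2) ys"
    have split: "M_tree m ys = m (M_tree m L) (M_tree m R)"
      using False by (simp add: M_tree_split L_def R_def)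
    have set_ys: "set ys = set L \<union> set R"
      by (simp add: L_def R_def flip: set_append)
    have L: "L \<noteq> []" "length L \<le> 2 ^ k" and R: "R \<noteq> []" "length R \<le> 2 ^ k"
      using False Suc.prems(2) by (auto simp: L_def R_def)
    have leaves: "\<forall>y\<in>set ys. real k * e \<le> y \<and> y \<le> 1 - real k * e"
      using Suc.prems(3) by (simp add: algebra_simps)
    then have "\<forall>y\<in>set L \<union> set R. (real k - 1) * e \<le> y \<and> y \<le> 1 - (real k - 1) * e"
      using e0 set_ys by (simp add: left_diff_distrib) (smt (verit))
    then have IH_L: "\<bar>M_tree m L - Max (set L)\<bar> \<le> real k * e"
      and IH_R: "\<bar>M_tree m R - Max (set R)\<bar> \<le> real k * e"
      using Suc.IH L R by auto
    have "Max (set L) \<in> set ys" "Max (set R) \<in> set ys"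
      using L R set_ys by auto
    then have "M_tree m L \<in> {0..1}" "M_tree m R \<in> {0..1}"
      using IH_L IH_R leaves by (auto simp: abs_le_iff)
    then have "\<bar>M_tree m ys - max (M_tree m L) (M_tree m R)\<bar> \<le> e"
      using hm split by simp
    moreover have "Max (set ys) = max (Max (set L)) (Max (set R))"
      using L R set_ys by (simp add: Max_Un)
    moreover have "\<bar>max (M_tree m L) (M_tree m R) - max (Max (set L)) (Max (set R))\<bar> \<le> real k * e"
      using IH_L IH_R by (auto simp: abs_le_iff max_def)
    ultimately show ?thesis by (simp add: algebra_simps)
  qed
qed

lemma M_tilde_approx_Max:
  fixes p :: "nat \<Rightarrow> real poly" and zs :: "real list"
  defines "l \<equiv> \<lceil>log 2 (real (length zs))\<rceil>"
  assumes hp: "\<And>a b. a \<in> {0..1} \<Longrightarrow> b \<in> {0..1} \<Longrightarrow> \<bar>m_alpha p \<alpha> a b - max a b\<bar> \<le> (1/2) ^ \<alpha>"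
    and "zs \<noteq> []" and "0 < B" and zs_bounded: "\<forall>z\<in>set zs. \<bar>z\<bar> \<le> B"
    and depth: "(real_of_int l - 1) * (1/2) ^ \<alpha> < 1/2"
  shows "\<bar>M_tilde p \<alpha> (length zs) B zs - Max (set zs)\<bar> \<le> B_prime \<alpha> (length zs) B * l * (1/2) ^ \<alpha>"
proof -
  define e :: real where "e = (1/2) ^ \<alpha>"
  define D where "D = 1/2 - (real_of_int l - 1) * e"
  define B' where "B' = B / D"
  define k where "k = nat l"
  have "0 < D" using depth by (simp add: D_def e_def)
  then have "0 < B'" and B_div_B': "B / B' = D" using \<open>0 < B\<close> by (simp_all add: B'_def)
  have B'_eq: "B_prime \<alpha> (length zs) B = B'" by (simp add: B_prime_def B'_def D_def e_def l_def)
  have n1: "1 \<le> real (length zs)" using \<open>zs \<noteq> []\<close> by (simp add: Suc_le_eq)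
  then have "0 \<le> log 2 (real (length zs))" by (subst zero_le_log_cancel_iff) auto
  then have "0 \<le> l" by (simp add: l_def)
  then have real_k: "real k = real_of_int l" by (simp add: k_def)
  have "real (length zs) = 2 powr log 2 (real (length zs))" using \<open>zs \<noteq> []\<close> by simp
  also have "\<dots> \<le> 2 powr real k" by (intro powr_mono) (simp_all add: real_k l_def)
  also have "\<dots> = 2 ^ k" by (simp add: powr_realpow)
  finally have "length zs \<le> 2 ^ k" by (metis of_nat_le_iff of_nat_numeral of_nat_power)
  define f where "f = (\<lambda>z. z / B' + 1/2)"
  define ys where "ys = map f zs"
  have leaves: "\<forall>y\<in>set ys. (real k - 1) * e \<le> y \<and> y \<le> 1 - (real k - 1) * e"
  proof
    fix y assume "y \<in> set ys"
    then obtain z where "z \<in> set zs" "y = z / B' + 1/2" by (auto simp: ys_def f_def)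
    moreover from this(1) have "\<bar>z\<bar> / B' \<le> B / B'"
      using zs_bounded \<open>0 < B'\<close> by (intro divide_right_mono) auto
    then have "\<bar>z / B'\<bar> \<le> D"
      using \<open>0 < B'\<close> B_div_B' by (simp add: abs_divide)
    then have "- D \<le> z / B' \<and> z / B' \<le> D"
      unfolding abs_le_iff by linarith
    ultimately show "(real k - 1) * e \<le> y \<and> y \<le> 1 - (real k - 1) * e"
      by (simp add: D_def real_k)
  qed
  have tree: "\<bar>M_tree (m_alpha p \<alpha>) ys - Max (set ys)\<bar> \<le> real k * e"
    using M_tree_approx_Max[of "m_alpha p \<alpha>" e ys k] hp leaves \<open>zs \<noteq> []\<close> \<open>length zs \<le> 2 ^ k\<close>
    by (simp add: ys_def e_def)
  have "mono f" using \<open>0 < B'\<close> by (auto simp: mono_def f_def divide_right_mono)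
  then have "Max (set ys) = f (Max (set zs))"
    using mono_Max_commute[of f "set zs"] \<open>zs \<noteq> []\<close> by (simp add: ys_def)
  then have "Max (set zs) = B' * (Max (set ys) - 1/2)"
    using \<open>0 < B'\<close> by (simp add: f_def)
  moreover have "M_tilde p \<alpha> (length zs) B zs = B' * (M_tree (m_alpha p \<alpha>) ys - 1/2)"
    by (simp add: M_tilde_def M_alpha_def B'_eq ys_def f_def)
  ultimately have "M_tilde p \<alpha> (length zs) B zs - Max (set zs) = B' * (M_tree (m_alpha p \<alpha>) ys - Max (set ys))"
    by (simp add: right_diff_distrib)
  then have "\<bar>M_tilde p \<alpha> (length zs) B zs - Max (set zs)\<bar> = B' * \<bar>M_tree (m_alpha p \<alpha>) ys - Max (set ys)\<bar>"
    using \<open>0 < B'\<close> by (simp add: abs_mult)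
  also have "\<dots> \<le> B' * (real k * e)"
    using tree \<open>0 < B'\<close> by (intro mult_left_mono) auto
  finally show ?thesis by (simp add: B'_eq real_k e_def)
qed

text \<open>For windows of at most \<open>100 \<le> 2^7\<close> entries and \<open>\<alpha> \<ge> 4\<close> the rescaling factor satisfies
  \<open>B' \<le> 8 B\<close>, which yields the constant \<open>56 = 8 \<cdot> 7\<close>.\<close>

lemma M_tilde_approx_Max_small:
  fixes p :: "nat \<Rightarrow> real poly" and zs :: "real list"
  assumes hp: "\<And>a b. a \<in> {0..1} \<Longrightarrow> b \<in> {0..1} \<Longrightarrow> \<bar>m_alpha p \<alpha> a b - max a b\<bar> \<le> (1/2) ^ \<alpha>"
    and "4 \<le> \<alpha>" and "zs \<noteq> []" and "length zs \<le> 100" and "0 < B"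
    and zs_bounded: "\<forall>z\<in>set zs. \<bar>z\<bar> \<le> B"
  shows "\<bar>M_tilde p \<alpha> (length zs) B zs - Max (set zs)\<bar> \<le> 56 * B * (1/2) ^ \<alpha>"
proof -
  define e :: real where "e = (1/2) ^ \<alpha>"
  define l where "l = \<lceil>log 2 (real (length zs))\<rceil>"
  have "e \<le> (1/2) ^ 4" unfolding e_def using \<open>4 \<le> \<alpha>\<close> by (intro power_decreasing) auto
  then have e: "0 \<le> e" "e \<le> 1/16" by (simp_all add: e_def eval_nat_numeral)
  have "1 \<le> real (length zs)" using \<open>zs \<noteq> []\<close> by (simp add: Suc_le_eq)
  then have log_nonneg: "0 \<le> log 2 (real (length zs))" by (subst zero_le_log_cancel_iff) auto
  have "log 2 (real (length zs)) \<le> log 2 (2 powr 7)"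
    using \<open>zs \<noteq> []\<close> \<open>length zs \<le> 100\<close> by (intro log_mono) auto
  then have "log 2 (real (length zs)) \<le> 7" by (simp only: log_powr_cancel)
  with log_nonneg have l: "0 \<le> l" "l \<le> 7" by (simp_all add: l_def ceiling_le_iff)
  then have "(real_of_int l - 1) * e \<le> 6 * (1/16)"
    using e by (intro mult_mono) auto
  then have D: "1/8 \<le> 1/2 - (real_of_int l - 1) * e" by simp
  have B_prime_eq: "B_prime \<alpha> (length zs) B = B / (1/2 - (real_of_int l - 1) * e)"
    by (simp add: B_prime_def l_def e_def)
  have "B_prime \<alpha> (length zs) B \<le> B / (1/8)"
    unfolding B_prime_eq using D \<open>0 < B\<close> by (intro divide_left_mono) auto
  then have "B_prime \<alpha> (length zs) B \<le> 8 * B" by simp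
  have "0 \<le> B_prime \<alpha> (length zs) B"
    unfolding B_prime_eq using D \<open>0 < B\<close> by simp
  have "\<bar>M_tilde p \<alpha> (length zs) B zs - Max (set zs)\<bar> \<le> B_prime \<alpha> (length zs) B * l * e"
    using M_tilde_approx_Max[OF hp \<open>zs \<noteq> []\<close> \<open>0 < B\<close> zs_bounded] D
    by (simp add: l_def e_def)
  also have "\<dots> \<le> (8 * B) * 7 * e"
    using \<open>B_prime \<alpha> (length zs) B \<le> 8 * B\<close> \<open>0 \<le> B_prime \<alpha> (length zs) B\<close> l e
    by (intro mult_mono) auto
  finally show ?thesis by (simp add: e_def)
qed

lemma r_alpha_approx_relu:
  fixes p :: "nat \<Rightarrow> real poly"
  assumes hp: "\<And>a b. a \<in> {0..1} \<Longrightarrow> b \<in> {0..1} \<Longrightarrow> \<bar>m_alpha p \<alpha> a b - max a b\<bar> \<le> (1/2) ^ \<alpha>"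
    and "\<bar>s\<bar> \<le> 1"
  shows "\<bar>r_alpha p \<alpha> s - max s 0\<bar> \<le> (1/2) ^ \<alpha>"
proof (cases "0 \<le> s")
  case True
  have "r_alpha p \<alpha> s = m_alpha p \<alpha> s 0" by (simp add: r_alpha_def m_alpha_def)
  then show ?thesis using hp[of s 0] True assms(2) by simp
next
  case False
  have "r_alpha p \<alpha> s = m_alpha p \<alpha> 0 (- s) + s" by (simp add: r_alpha_def m_alpha_def field_simps)
  then show ?thesis using hp[of 0 "- s"] False assms(2) by simp
qed

lemma r_tilde_approx_relu:
  fixes p :: "nat \<Rightarrow> real poly"
  assumes hp: "\<And>a b. a \<in> {0..1} \<Longrightarrow> b \<in> {0..1} \<Longrightarrow> \<bar>m_alpha p \<alpha> a b - max a b\<bar> \<le> (1/2) ^ \<alpha>"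
    and "0 < B" and "\<bar>t\<bar> \<le> B"
  shows "\<bar>r_tilde p \<alpha> B t - max t 0\<bar> \<le> B * (1/2) ^ \<alpha>"
proof -
  have "\<bar>t / B\<bar> \<le> 1" using assms(2,3) by (simp add: abs_divide)
  then have "\<bar>r_alpha p \<alpha> (t / B) - max (t / B) 0\<bar> \<le> (1/2) ^ \<alpha>"
    using r_alpha_approx_relu[OF hp] by blast
  moreover have "r_tilde p \<alpha> B t - max t 0 = B * (r_alpha p \<alpha> (t / B) - max (t / B) 0)"
    using \<open>0 < B\<close> by (simp add: r_tilde_def right_diff_distrib max_mult_distrib_left)
  ultimately show ?thesis using \<open>0 < B\<close> by (simp add: abs_mult)
qed

lemma abs_dot_diff_le:
  fixes r x x' :: "real list"
  assumes "length x = length r" "length x' = length r"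
  shows "\<bar>sum_list (map2 (*) r x') - sum_list (map2 (*) r x)\<bar> \<le> (\<Sum>a\<leftarrow>r. \<bar>a\<bar>) * linf_dist x' x"
  using assms
proof (induction r arbitrary: x x')
  case Nil
  then show ?case by simp
next
  case (Cons a r)
  then obtain b xs b' xs' where x: "x = b # xs" and x': "x' = b' # xs'"
    by (cases x; cases x') auto
  define \<delta> where "\<delta> = linf_dist x' x"
  have head: "\<bar>a * b' - a * b\<bar> \<le> \<bar>a\<bar> * \<delta>"
    unfolding \<delta>_def x x' by (simp add: abs_mult mult_left_mono flip: right_diff_distrib)
  have "\<bar>sum_list (map2 (*) r xs') - sum_list (map2 (*) r xs)\<bar> \<le> (\<Sum>a\<leftarrow>r. \<bar>a\<bar>) * linf_dist xs' xs"
    using Cons x x' by simp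
  also have "\<dots> \<le> (\<Sum>a\<leftarrow>r. \<bar>a\<bar>) * \<delta>"
    unfolding \<delta>_def x x' by (intro mult_left_mono sum_list_nonneg) auto
  finally have "\<bar>(a * b' + sum_list (map2 (*) r xs')) - (a * b + sum_list (map2 (*) r xs))\<bar>
      \<le> \<bar>a\<bar> * \<delta> + (\<Sum>a\<leftarrow>r. \<bar>a\<bar>) * \<delta>"
    using head by linarith
  then show ?case by (simp add: x x' \<delta>_def distrib_right)
qed

lemma abs_exp_diff_le:
  fixes a b :: real
  assumes "a \<le> B" "b \<le> B"
  shows "\<bar>exp a - exp b\<bar> \<le> exp B * \<bar>a - b\<bar>"
proof -
  have "exp v - exp u \<le> exp B * (v - u)" if "u \<le> v" "v \<le> B" for u v :: real
  proof -
    have "exp v - exp u = exp v * (1 - exp (u - v))" by (simp add: exp_diff field_simps)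
    also have "\<dots> \<le> exp v * (v - u)"
      using exp_ge_add_one_self[of "u - v"] by (intro mult_left_mono) (linarith, simp)
    also have "\<dots> \<le> exp B * (v - u)" using that by (intro mult_right_mono) auto
    finally show ?thesis .
  qed
  from this[of a b] this[of b a] assms show ?thesis by (cases "a \<le> b") (auto simp: abs_if)
qed

lemma abs_sum_exp_diff_le:
  fixes x x' :: "real list"
  assumes "length x' = length x" "linf x \<le> B" "linf x' \<le> B"
  shows "\<bar>(\<Sum>t\<leftarrow>x'. exp t) - (\<Sum>t\<leftarrow>x. exp t)\<bar> \<le> real (length x) * exp B * linf_dist x' x"
  using assms
proof (induction x arbitrary: x')
  case Nil
  then show ?case by simp
next
  case (Cons b xs)
  then obtain b' xs' where x': "x' = b' # xs'" by (cases x') auto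
  define \<delta> where "\<delta> = linf_dist x' (b # xs)"
  have "\<bar>exp b' - exp b\<bar> \<le> exp B * \<bar>b' - b\<bar>"
    using Cons.prems x' by (intro abs_exp_diff_le) auto
  also have "\<dots> \<le> exp B * \<delta>" unfolding \<delta>_def x' by simp
  finally have head: "\<bar>exp b' - exp b\<bar> \<le> exp B * \<delta>" .
  have "\<bar>(\<Sum>t\<leftarrow>xs'. exp t) - (\<Sum>t\<leftarrow>xs. exp t)\<bar> \<le> real (length xs) * exp B * linf_dist xs' xs"
    using Cons x' by simp
  also have "\<dots> \<le> real (length xs) * exp B * \<delta>"
    unfolding \<delta>_def x' by (intro mult_left_mono) simp_all
  finally have "\<bar>(exp b' + (\<Sum>t\<leftarrow>xs'. exp t)) - (exp b + (\<Sum>t\<leftarrow>xs. exp t))\<bar>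
      \<le> exp B * \<delta> + real (length xs) * exp B * \<delta>"
    using head by linarith
  then show ?case by (simp add: x' \<delta>_def algebra_simps)
qed

lemma abs_quotient_diff_le:
  fixes a a' S S' L M u v :: real
  assumes "0 < L" "L \<le> S" "L \<le> S'" "\<bar>a' - a\<bar> \<le> u" "0 \<le> a" "a \<le> M" "\<bar>S' - S\<bar> \<le> v"
  shows "\<bar>a' / S' - a / S\<bar> \<le> u / L + M * v / (L * L)"
proof -
  have "0 < S" "0 < S'" using assms by auto
  have split: "a' / S' - a / S = (a' - a) / S' + a * (S - S') / (S * S')"
    using \<open>0 < S\<close> \<open>0 < S'\<close> by (simp add: field_simps)
  have first: "\<bar>(a' - a) / S'\<bar> \<le> u / L"
    unfolding abs_divide using assms \<open>0 < S'\<close> by (intro frac_le) auto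
  have second: "\<bar>a * (S - S') / (S * S')\<bar> \<le> M * v / (L * L)"
    unfolding abs_divide abs_mult using assms \<open>0 < S\<close> \<open>0 < S'\<close>
    by (intro frac_le mult_mono) (auto simp: abs_minus_commute)
  show ?thesis unfolding split by (rule order_trans[OF abs_triangle_ineq add_mono[OF first second]])
qed

lemma abs_Max_image_diff_le:
  fixes f g :: "'a \<Rightarrow> real"
  assumes "finite A" "A \<noteq> {}" "\<forall>a\<in>A. \<bar>f a - g a\<bar> \<le> e"
  shows "\<bar>Max (f ` A) - Max (g ` A)\<bar> \<le> e"
proof -
  have Max_le: "Max (f ` A) \<le> Max (g ` A) + e" if "\<forall>a\<in>A. f a \<le> g a + e" for f g :: "'a \<Rightarrow> real"
  proof (subst Max_le_iff)
    show "\<forall>y\<in>f ` A. y \<le> Max (g ` A) + e"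
      using that assms(1) by (auto intro: order_trans add_right_mono Max_ge)
  qed (use assms(1,2) in auto)
  have "\<forall>a\<in>A. f a \<le> g a + e" "\<forall>a\<in>A. g a \<le> f a + e"
    using assms(3) by (auto simp: abs_le_iff)
  then have "Max (f ` A) \<le> Max (g ` A) + e" "Max (g ` A) \<le> Max (f ` A) + e"
    by (simp_all add: Max_le)
  then show ?thesis by linarith
qed

lemma length_apply_block [simp]:
  "wf_block d b \<Longrightarrow> length x = d \<Longrightarrow> length (apply_block b x) = out_dim d b"
  by (cases b) auto

lemma length_apply_block_approx [simp]:
  "wf_block d b \<Longrightarrow> length x = d \<Longrightarrow> length (apply_block_approx p \<alpha> B b x) = out_dim d b"
  by (cases b) auto

lemma linear_block_lipschitz:
  assumes "wf_block d (Linear A c)" "length x = d" "length x' = d"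
  shows "linf_dist (apply_block (Linear A c) x') (apply_block (Linear A c) x)
    \<le> (\<Sum>row\<leftarrow>A. \<Sum>a\<leftarrow>row. \<bar>a\<bar>) * linf_dist x' x"
proof (rule linf_dist_le)
  have rows_nonneg: "0 \<le> (\<Sum>a\<leftarrow>row. \<bar>a\<bar>)" for row :: "real list"
    by (rule sum_list_nonneg) auto
  show "length (apply_block (Linear A c) x') = length (apply_block (Linear A c) x)"
    using assms by simp
  show "0 \<le> (\<Sum>row\<leftarrow>A. \<Sum>a\<leftarrow>row. \<bar>a\<bar>) * linf_dist x' x"
    using rows_nonneg by (intro mult_nonneg_nonneg sum_list_nonneg linf_nonneg) auto
  fix k assume "k < length (apply_block (Linear A c) x')"
  then have k: "k < length A" using assms by simp
  then have "A ! k \<in> set A" by simp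
  then have "length (A ! k) = d" using assms(1) by simp
  have "\<bar>apply_block (Linear A c) x' ! k - apply_block (Linear A c) x ! k\<bar>
      = \<bar>sum_list (map2 (*) (A ! k) x') - sum_list (map2 (*) (A ! k) x)\<bar>"
    using k assms by simp
  also have "\<dots> \<le> (\<Sum>a\<leftarrow>A ! k. \<bar>a\<bar>) * linf_dist x' x"
    using \<open>length (A ! k) = d\<close> assms by (intro abs_dot_diff_le) auto
  also have "\<dots> \<le> (\<Sum>row\<leftarrow>A. \<Sum>a\<leftarrow>row. \<bar>a\<bar>) * linf_dist x' x"
    using \<open>A ! k \<in> set A\<close> rows_nonneg
    by (intro mult_right_mono member_le_sum_list linf_nonneg) auto
  finally show "\<bar>apply_block (Linear A c) x' ! k - apply_block (Linear A c) x ! k\<bar>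
      \<le> (\<Sum>row\<leftarrow>A. \<Sum>a\<leftarrow>row. \<bar>a\<bar>) * linf_dist x' x" .
qed

lemma relu_block_error:
  fixes p :: "nat \<Rightarrow> real poly"
  assumes hp: "\<And>a b. a \<in> {0..1} \<Longrightarrow> b \<in> {0..1} \<Longrightarrow> \<bar>m_alpha p \<alpha> a b - max a b\<bar> \<le> (1/2) ^ \<alpha>"
    and "0 < B" and "length x' = length x" and "linf x' \<le> B"
  shows "linf_dist (apply_block_approx p \<alpha> B ReLU x') (apply_block ReLU x)
    \<le> linf_dist x' x + B * (1/2) ^ \<alpha>"
proof (rule linf_dist_le)
  show "length (apply_block_approx p \<alpha> B ReLU x') = length (apply_block ReLU x)"
    using assms by simp
  show "0 \<le> linf_dist x' x + B * (1/2) ^ \<alpha>"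
    using \<open>0 < B\<close> linf_nonneg[of "map2 (-) x' x"] by simp
  fix i assume "i < length (apply_block_approx p \<alpha> B ReLU x')"
  then have i: "i < length x'" by simp
  then have "\<bar>x' ! i\<bar> \<le> B" using nth_le_linf[of i x'] assms(4) by simp
  then have "\<bar>r_tilde p \<alpha> B (x' ! i) - max (x' ! i) 0\<bar> \<le> B * (1/2) ^ \<alpha>"
    using r_tilde_approx_relu[OF hp \<open>0 < B\<close>] by blast
  moreover have "\<bar>max (x' ! i) 0 - max (x ! i) 0\<bar> \<le> linf_dist x' x"
    using nth_diff_le_linf_dist[of x' x i] i assms(3) by (auto simp: abs_le_iff max_def)
  ultimately show "\<bar>apply_block_approx p \<alpha> B ReLU x' ! i - apply_block ReLU x ! i\<bar>
      \<le> linf_dist x' x + B * (1/2) ^ \<alpha>"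
    using i assms(3) by simp
qed

lemma maxpool_block_error:
  fixes p :: "nat \<Rightarrow> real poly"
  assumes hp: "\<And>a b. a \<in> {0..1} \<Longrightarrow> b \<in> {0..1} \<Longrightarrow> \<bar>m_alpha p \<alpha> a b - max a b\<bar> \<le> (1/2) ^ \<alpha>"
    and "4 \<le> \<alpha>" and "0 < B" and wf: "wf_block d (MaxPool k0 ws)"
    and "length x = d" "length x' = d" and "linf x' \<le> B"
  shows "linf_dist (apply_block_approx p \<alpha> B (MaxPool k0 ws) x') (apply_block (MaxPool k0 ws) x)
    \<le> linf_dist x' x + 56 * B * (1/2) ^ \<alpha>"
proof (rule linf_dist_le)
  show "length (apply_block_approx p \<alpha> B (MaxPool k0 ws) x') = length (apply_block (MaxPool k0 ws) x)"
    by simp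
  show "0 \<le> linf_dist x' x + 56 * B * (1/2) ^ \<alpha>"
    using \<open>0 < B\<close> linf_nonneg[of "map2 (-) x' x"] by simp
  fix k assume "k < length (apply_block_approx p \<alpha> B (MaxPool k0 ws) x')"
  then have "ws ! k \<in> set ws" by simp
  define w where "w = ws ! k"
  define zs' where "zs' = map (\<lambda>i. x' ! i) w"
  have w: "length w = k0 ^ 2" "\<forall>i\<in>set w. i < d" and "1 \<le> k0" "k0 \<le> 10"
    using wf \<open>ws ! k \<in> set ws\<close> by (auto simp: w_def)
  then have "k0 ^ 2 \<le> 10 ^ 2" by (intro power_mono) auto
  then have zs': "zs' \<noteq> []" "length zs' = k0 ^ 2" "length zs' \<le> 100"
    using w \<open>1 \<le> k0\<close> by (auto simp: zs'_def)
  have "\<forall>z\<in>set zs'. \<bar>z\<bar> \<le> B"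
    using w(2) nth_le_linf[of _ x'] assms(6,7) by (force simp: zs'_def)
  then have "\<bar>M_tilde p \<alpha> (k0 ^ 2) B zs' - Max (set zs')\<bar> \<le> 56 * B * (1/2) ^ \<alpha>"
    using M_tilde_approx_Max_small[OF hp \<open>4 \<le> \<alpha>\<close> zs'(1,3) \<open>0 < B\<close>] zs'(2) by simp
  moreover have "\<bar>Max (set zs') - Max (set (map (\<lambda>i. x ! i) w))\<bar> \<le> linf_dist x' x"
    unfolding zs'_def set_map using zs' w(2) assms(5,6)
    by (intro abs_Max_image_diff_le) (auto simp: zs'_def intro: nth_diff_le_linf_dist)
  ultimately show "\<bar>apply_block_approx p \<alpha> B (MaxPool k0 ws) x' ! k - apply_block (MaxPool k0 ws) x ! k\<bar>
      \<le> linf_dist x' x + 56 * B * (1/2) ^ \<alpha>"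
    using \<open>k < _\<close> by (simp add: w_def zs'_def)
qed

lemma softmax_block_lipschitz:
  assumes "length x' = length x" "linf x \<le> B" "linf x' \<le> B"
  shows "linf_dist (apply_block Softmax x') (apply_block Softmax x)
    \<le> (exp (2 * B) + real (length x) * exp (4 * B)) * linf_dist x' x"
proof (rule linf_dist_le)
  define \<delta> where "\<delta> = linf_dist x' x"
  define S where "S = (\<Sum>t\<leftarrow>x. exp t)"
  define S' where "S' = (\<Sum>t\<leftarrow>x'. exp t)"
  show "length (apply_block Softmax x') = length (apply_block Softmax x)"
    using assms by simp
  show "0 \<le> (exp (2 * B) + real (length x) * exp (4 * B)) * linf_dist x' x"
    by (simp add: linf_nonneg)
  fix i assume "i < length (apply_block Softmax x')"
  then have i: "i < length x" "i < length x'" using assms(1) by auto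
  have bounded: "\<bar>x ! i\<bar> \<le> B" "\<bar>x' ! i\<bar> \<le> B"
    using nth_le_linf[OF i(1)] nth_le_linf[OF i(2)] assms(2,3) by auto
  have "exp (x ! i) \<le> S" "exp (x' ! i) \<le> S'"
    unfolding S_def S'_def using i by (auto intro!: member_le_sum_list)
  moreover have "exp (- B) \<le> exp (x ! i)" "exp (- B) \<le> exp (x' ! i)"
    using bounded by auto
  ultimately have "exp (- B) \<le> S" "exp (- B) \<le> S'" by linarith+
  moreover have "0 \<le> exp (x ! i)" "exp (x ! i) \<le> exp B" using bounded by auto
  moreover have "\<bar>exp (x' ! i) - exp (x ! i)\<bar> \<le> exp B * \<delta>"
  proof -
    have "\<bar>exp (x' ! i) - exp (x ! i)\<bar> \<le> exp B * \<bar>x' ! i - x ! i\<bar>"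
      using bounded by (intro abs_exp_diff_le) auto
    also have "\<dots> \<le> exp B * \<delta>"
      using nth_diff_le_linf_dist[of x' x i] i assms(1) by (simp add: \<delta>_def)
    finally show ?thesis .
  qed
  moreover have "\<bar>S' - S\<bar> \<le> real (length x) * exp B * \<delta>"
    unfolding S_def S'_def \<delta>_def using assms by (rule abs_sum_exp_diff_le)
  ultimately have "\<bar>exp (x' ! i) / S' - exp (x ! i) / S\<bar>
      \<le> exp B * \<delta> / exp (- B) + exp B * (real (length x) * exp B * \<delta>) / (exp (- B) * exp (- B))"
    by (intro abs_quotient_diff_le) auto
  also have "\<dots> = (exp (2 * B) + real (length x) * exp (4 * B)) * \<delta>"
    by (simp add: exp_minus field_simps flip: exp_add)
  finally show "\<bar>apply_block Softmax x' ! i - apply_block Softmax x ! i\<bar>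
      \<le> (exp (2 * B) + real (length x) * exp (4 * B)) * linf_dist x' x"
    using i by (simp add: S_def S'_def \<delta>_def)
qed

lemma block_approx_error:
  fixes p :: "nat \<Rightarrow> real poly"
  assumes hp: "\<And>\<alpha> a b. a \<in> {0..1} \<Longrightarrow> b \<in> {0..1} \<Longrightarrow> \<bar>m_alpha p \<alpha> a b - max a b\<bar> \<le> (1/2) ^ \<alpha>"
    and "0 < B" and wf: "wf_block d b"
  shows "\<exists>K\<ge>0. \<exists>C. \<forall>\<alpha> x x'. 4 \<le> \<alpha> \<longrightarrow> length x = d \<longrightarrow> length x' = d \<longrightarrow> linf x \<le> B \<longrightarrow> linf x' \<le> B \<longrightarrow>
    linf_dist (apply_block_approx p \<alpha> B b x') (apply_block b x) \<le> K * linf_dist x' x + C * (1/2) ^ \<alpha>"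
proof (cases b)
  case (Linear A c)
  have "0 \<le> (\<Sum>row\<leftarrow>A. \<Sum>a\<leftarrow>row. \<bar>a\<bar>)"
    by (auto intro!: sum_list_nonneg)
  with Linear show ?thesis
    using linear_block_lipschitz[of d A c] wf
    by (intro exI[of _ "\<Sum>row\<leftarrow>A. \<Sum>a\<leftarrow>row. \<bar>a\<bar>"]) (auto intro!: exI[of _ 0])
next
  case ReLU
  then show ?thesis
    using relu_block_error[OF hp \<open>0 < B\<close>] by (intro exI[of _ 1]) (auto intro!: exI[of _ B])
next
  case (MaxPool k0 ws)
  then show ?thesis
    using maxpool_block_error[OF hp _ \<open>0 < B\<close> wf[unfolded MaxPool]]
    by (intro exI[of _ 1]) (auto intro!: exI[of _ "56 * B"])
next
  case Softmax
  then show ?thesis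
    using softmax_block_lipschitz[of _ _ B]
    by (intro exI[of _ "exp (2 * B) + real d * exp (4 * B)"]) (auto intro!: exI[of _ 0])
qed

lemma eval_model_Cons [simp]: "eval_model (b # bs) x = eval_model bs (apply_block b x)"
  by (simp add: eval_model_def)

lemma eval_model_approx_Cons [simp]:
  "eval_model_approx p \<alpha> B (b # bs) x = eval_model_approx p \<alpha> B bs (apply_block_approx p \<alpha> B b x)"
  by (simp add: eval_model_approx_def)

lemma model_approx_error:
  fixes p :: "nat \<Rightarrow> real poly"
  assumes hp: "\<And>\<alpha> a b. a \<in> {0..1} \<Longrightarrow> b \<in> {0..1} \<Longrightarrow> \<bar>m_alpha p \<alpha> a b - max a b\<bar> \<le> (1/2) ^ \<alpha>"
    and "0 < B" and "wf_model d bs"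
  shows "\<exists>K\<ge>0. \<exists>C. \<forall>\<alpha> x x'. 4 \<le> \<alpha> \<longrightarrow> length x = d \<longrightarrow> length x' = d \<longrightarrow>
    (\<forall>j<length bs. linf (eval_model (take j bs) x) \<le> B \<and> linf (eval_model_approx p \<alpha> B (take j bs) x') \<le> B) \<longrightarrow>
    linf_dist (eval_model_approx p \<alpha> B bs x') (eval_model bs x) \<le> K * linf_dist x' x + C * (1/2) ^ \<alpha>"
  using assms(3)
proof (induction bs arbitrary: d)
  case Nil
  show ?case
    by (intro exI[of _ 1]) (auto intro!: exI[of _ 0] simp: eval_model_def eval_model_approx_def)
next
  case (Cons b bs)
  then have wf: "wf_block d b" "wf_model (out_dim d b) bs" by simp_all
  obtain K\<^sub>1 C\<^sub>1 where "0 \<le> K\<^sub>1" and block: "\<forall>\<alpha> x x'. 4 \<le> \<alpha> \<longrightarrow> length x = d \<longrightarrow> length x' = d \<longrightarrow>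
      linf x \<le> B \<longrightarrow> linf x' \<le> B \<longrightarrow>
      linf_dist (apply_block_approx p \<alpha> B b x') (apply_block b x) \<le> K\<^sub>1 * linf_dist x' x + C\<^sub>1 * (1/2) ^ \<alpha>"
    using block_approx_error[OF hp \<open>0 < B\<close> wf(1)] by blast
  obtain K\<^sub>2 C\<^sub>2 where "0 \<le> K\<^sub>2" and rest: "\<forall>\<alpha> x x'. 4 \<le> \<alpha> \<longrightarrow> length x = out_dim d b \<longrightarrow> length x' = out_dim d b \<longrightarrow>
      (\<forall>j<length bs. linf (eval_model (take j bs) x) \<le> B \<and> linf (eval_model_approx p \<alpha> B (take j bs) x') \<le> B) \<longrightarrow>
      linf_dist (eval_model_approx p \<alpha> B bs x') (eval_model bs x) \<le> K\<^sub>2 * linf_dist x' x + C\<^sub>2 * (1/2) ^ \<alpha>"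
    using Cons.IH[OF wf(2)] by blast
  show ?case
  proof (rule exI[of _ "K\<^sub>2 * K\<^sub>1"], intro conjI exI[of _ "K\<^sub>2 * C\<^sub>1 + C\<^sub>2"] allI impI)
    show "0 \<le> K\<^sub>2 * K\<^sub>1" using \<open>0 \<le> K\<^sub>1\<close> \<open>0 \<le> K\<^sub>2\<close> by simp
    fix \<alpha> :: nat and x x' :: "real list"
    assume "4 \<le> \<alpha>" "length x = d" "length x' = d"
      and bounded: "\<forall>j<length (b # bs). linf (eval_model (take j (b # bs)) x) \<le> B
        \<and> linf (eval_model_approx p \<alpha> B (take j (b # bs)) x') \<le> B"
    define y where "y = apply_block b x"
    define y' where "y' = apply_block_approx p \<alpha> B b x'"
    have "linf x \<le> B" "linf x' \<le> B"
      using bounded[rule_format, of 0] by (simp_all add: eval_model_def eval_model_approx_def)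
    then have "linf_dist y' y \<le> K\<^sub>1 * linf_dist x' x + C\<^sub>1 * (1/2) ^ \<alpha>"
      using block \<open>4 \<le> \<alpha>\<close> \<open>length x = d\<close> \<open>length x' = d\<close> by (simp add: y_def y'_def)
    then have "K\<^sub>2 * linf_dist y' y \<le> K\<^sub>2 * (K\<^sub>1 * linf_dist x' x + C\<^sub>1 * (1/2) ^ \<alpha>)"
      using \<open>0 \<le> K\<^sub>2\<close> by (rule mult_left_mono)
    moreover have "\<forall>j<length bs. linf (eval_model (take j bs) y) \<le> B
        \<and> linf (eval_model_approx p \<alpha> B (take j bs) y') \<le> B"
      using bounded by (auto simp: y_def y'_def dest: spec[of _ "Suc _"])
    then have "linf_dist (eval_model_approx p \<alpha> B bs y') (eval_model bs y)
        \<le> K\<^sub>2 * linf_dist y' y + C\<^sub>2 * (1/2) ^ \<alpha>"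
      using rest \<open>4 \<le> \<alpha>\<close> wf(1) \<open>length x = d\<close> \<open>length x' = d\<close> by (simp add: y_def y'_def)
    ultimately show "linf_dist (eval_model_approx p \<alpha> B (b # bs) x') (eval_model (b # bs) x)
        \<le> K\<^sub>2 * K\<^sub>1 * linf_dist x' x + (K\<^sub>2 * C\<^sub>1 + C\<^sub>2) * (1/2) ^ \<alpha>"
      by (simp add: y_def y'_def algebra_simps)
  qed
qed

theorem theorem4:
  fixes p :: "nat \<Rightarrow> real poly" and B :: real and blks :: "block list" and d :: nat
  assumes hB: "B > 1"
    and hp: "\<And>\<alpha> a b. a \<in> {0..1} \<Longrightarrow> b \<in> {0..1} \<Longrightarrow>
               \<bar>m_alpha p \<alpha> a b - max a b\<bar> \<le> (1/2) ^ \<alpha>"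
    and hne: "blks \<noteq> []"
    and hwf: "wf_model d blks"
  shows "\<exists>C::real. \<forall>\<alpha>::nat. \<forall>x::real list.
           \<alpha> \<ge> 4 \<longrightarrow> length x = d \<longrightarrow>
           (\<forall>j<length blks. linf (eval_model (take j blks) x) \<le> B
                            \<and> linf (eval_model_approx p \<alpha> B (take j blks) x) \<le> B) \<longrightarrow>
           linf (map2 (-) (eval_model_approx p \<alpha> B blks x) (eval_model blks x)) \<le> C * (1/2) ^ \<alpha>"
proof -
  have "0 < B" using hB by simp
  from model_approx_error[OF hp this hwf] obtain K C where bound:
    "\<forall>\<alpha> x x'. 4 \<le> \<alpha> \<longrightarrow> length x = d \<longrightarrow> length x' = d \<longrightarrow>
      (\<forall>j<length blks. linf (eval_model (take j blks) x) \<le> B \<and> linf (eval_model_approx p \<alpha> B (take j blks) x') \<le> B) \<longrightarrow>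
      linf_dist (eval_model_approx p \<alpha> B blks x') (eval_model blks x) \<le> K * linf_dist x' x + C * (1/2) ^ \<alpha>"
    by blast
  show ?thesis
  proof (intro exI[of _ C] allI impI)
    fix \<alpha> :: nat and x :: "real list"
    assume "4 \<le> \<alpha>" "length x = d"
      "\<forall>j<length blks. linf (eval_model (take j blks) x) \<le> B \<and> linf (eval_model_approx p \<alpha> B (take j blks) x) \<le> B"
    then show "linf_dist (eval_model_approx p \<alpha> B blks x) (eval_model blks x) \<le> C * (1/2) ^ \<alpha>"
      using bound[rule_format, of \<alpha> x x] by simp
  qed
qed

end
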